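(* Let $\mathbf M=(M_p)_{p\in\mathbb N_0}$ and $\mathbf N=(N_p)_{p\in\mathbb N_0}$ be sequences of positive reals with $M_0=N_0=1$ satisfying $M_p^2\le M_{p-1}M_{p+1}$ and $N_p^2\le N_{p-1}N_{p+1}$ for all $p\in\mathbb N$. Then the following are equivalent: (i) there exists $A\ge1$ such that $M_{p+1}\le A^{p+1}N_p$ for all $p\in\mathbb N_0$; (ii) there exist $A\ge1$ and $B>0$ such that $\omega_{\mathbf N}(t)+\log t\le\omega_{\mathbf M}(At)+B$ for all $t>0$.
   Context: For a sequence $\mathbf M=(M_p)_{p\in\mathbb N_0}$ with $M_0=1$, the associated function is $\omega_{\mathbf M}(t)=\sup_{p\in\mathbb N_0}\log\frac{|t|^p}{M_p}$, $t\in\mathbb R$ (with $0^0=1$). *)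

theory Defs
  imports Complex_Main "HOL-Library.Extended_Real"
begin

text \<open>Associated function omega_M(t) = sup_p log(|t|^p / M_p), valued in the extended
  reals (the supremum may be infinite); log(0) is taken as minus infinity (only relevant for t = 0,
  p > 0).\<close>
definition assoc_fun :: "(nat \<Rightarrow> real) \<Rightarrow> real \<Rightarrow> ereal" where
  "assoc_fun M t = (SUP p\<in>(UNIV::nat set).
      (if \<bar>t\<bar> ^ p / M p > 0 then ereal (ln (\<bar>t\<bar> ^ p / M p)) else -\<infinity>))"

end

theory Submission
  imports Defs
begin

text \<open>Both conditions compare the terms \<open>t\<^sup>p\<^sup>+\<^sup>1 / N\<^sub>p\<close> and \<open>(A t)\<^sup>p\<^sup>+\<^sup>1 / M\<^sub>p\<^sub>+\<^sub>1\<close>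
  of the two suprema. From (i) they are dominated termwise. Conversely, for log-convex \<open>M\<close>
  the quotients \<open>M\<^sub>k\<^sub>+\<^sub>1 / M\<^sub>k\<close> increase, so the supremum defining \<open>\<omega>\<^sub>M(s)\<close> at
  \<open>s = M\<^sub>p\<^sub>+\<^sub>1 / M\<^sub>p\<close> is attained at the index \<open>p + 1\<close>; evaluating (ii) at \<open>t = s / A\<close>
  then gives \<open>M\<^sub>p\<^sub>+\<^sub>1 \<le> e\<^sup>B A\<^sup>p\<^sup>+\<^sup>1 N\<^sub>p\<close>.\<close>

lemma assoc_fun_eq_SUP:
  assumes "t > 0" and "\<And>p. M p > 0"
  shows "assoc_fun M t = (SUP p. ereal (ln (t ^ p / M p)))"
  unfolding assoc_fun_def using assms by (intro SUP_cong) auto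

lemma assoc_fun_ge:
  assumes "t > 0" and "\<And>p. M p > 0"
  shows "ereal (ln (t ^ p / M p)) \<le> assoc_fun M t"
  unfolding assoc_fun_eq_SUP[OF assms] by (rule SUP_upper) simp

lemma log_convex_imp_incseq_quotient:
  fixes M :: "nat \<Rightarrow> real"
  assumes Mpos: "\<And>p. M p > 0"
    and Mlc: "\<And>p. p \<ge> 1 \<Longrightarrow> (M p)^2 \<le> M (p - 1) * M (p + 1)"
  shows "incseq (\<lambda>k. M (Suc k) / M k)"
proof (rule incseq_SucI)
  fix k
  have "M (Suc k) * M (Suc k) \<le> M k * M (Suc (Suc k))"
    using Mlc[of "Suc k"] by (simp add: power2_eq_square)
  then show "M (Suc k) / M k \<le> M (Suc (Suc k)) / M (Suc k)"
    using Mpos[of k] Mpos[of "Suc k"] by (simp add: divide_simps mult.commute)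
qed

lemma max_term_at_crossing:
  fixes M :: "nat \<Rightarrow> real"
  assumes Mpos: "\<And>p. M p > 0" and s: "s > 0"
    and below: "\<And>k. k < n \<Longrightarrow> M (Suc k) \<le> s * M k"
    and above: "\<And>k. n \<le> k \<Longrightarrow> s * M k \<le> M (Suc k)"
  shows "s ^ q / M q \<le> s ^ n / M n"
proof -
  define f where "f k = s ^ k / M k" for k
  have up: "f k \<le> f (Suc k)" if "k < n" for k
    unfolding f_def using below[OF that] Mpos[of k] Mpos[of "Suc k"] s
    by (simp add: divide_simps)
  have down: "f (Suc k) \<le> f k" if "n \<le> k" for k
    unfolding f_def using above[OF that] Mpos[of k] Mpos[of "Suc k"] s
    by (simp add: divide_simps)
  have "f q \<le> f n"
  proof (cases "q \<le> n")
    case True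
    then show ?thesis
      by (induction n rule: dec_induct) (auto intro: order_trans up)
  next
    case False
    then have "n \<le> q" by simp
    then show ?thesis
      by (induction q rule: dec_induct) (auto intro: order_trans down)
  qed
  then show ?thesis unfolding f_def .
qed

lemma assoc_fun_at_quotient:
  fixes M :: "nat \<Rightarrow> real"
  assumes Mpos: "\<And>p. M p > 0"
    and Mlc: "\<And>p. p \<ge> 1 \<Longrightarrow> (M p)^2 \<le> M (p - 1) * M (p + 1)"
    and s_def: "s = M (Suc n) / M n"
  shows "assoc_fun M s = ereal (ln (s ^ Suc n / M (Suc n)))"
proof -
  have s: "s > 0" using Mpos by (simp add: s_def)
  have incseq: "incseq (\<lambda>k. M (Suc k) / M k)"
    by (rule log_convex_imp_incseq_quotient[OF Mpos Mlc])
  have term_le: "s ^ q / M q \<le> s ^ Suc n / M (Suc n)" for q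
  proof (rule max_term_at_crossing[OF Mpos s])
    fix k assume "k < Suc n"
    then show "M (Suc k) \<le> s * M k"
      using monoD[OF incseq, of k n] Mpos[of k] by (simp add: s_def pos_divide_le_eq)
  next
    fix k assume "Suc n \<le> k"
    then show "s * M k \<le> M (Suc k)"
      using monoD[OF incseq, of n k] Mpos[of k] by (simp add: s_def pos_le_divide_eq)
  qed
  show ?thesis
  proof (rule antisym)
    show "assoc_fun M s \<le> ereal (ln (s ^ Suc n / M (Suc n)))"
      unfolding assoc_fun_eq_SUP[OF s Mpos]
      using term_le s Mpos by (intro SUP_least) simp
  qed (rule assoc_fun_ge[OF s Mpos])
qed

lemma assoc_fun_shift_le_if_quotient_bound:
  fixes M N :: "nat \<Rightarrow> real"
  assumes Mpos: "\<And>p. M p > 0" and Npos: "\<And>p. N p > 0" and A: "A > 0"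
    and bound: "\<And>p. M (p + 1) \<le> A ^ (p + 1) * N p"
    and t: "t > 0"
  shows "assoc_fun N t + ereal (ln t) \<le> assoc_fun M (A * t)"
proof -
  have "assoc_fun N t + ereal (ln t) = (SUP p. ereal (ln (t ^ p / N p)) + ereal (ln t))"
    unfolding assoc_fun_eq_SUP[OF t Npos] by (rule SUP_ereal_add_left[symmetric]) auto
  also have "\<dots> \<le> assoc_fun M (A * t)"
  proof (rule SUP_least)
    fix p :: nat
    have "t ^ (p + 1) / N p \<le> (A * t) ^ (p + 1) / M (p + 1)"
      using bound[of p] Mpos[of "p + 1"] Npos[of p] t
      by (simp add: field_simps power_mult_distrib mult_left_mono)
    then have "ln (t ^ (p + 1) / N p) \<le> ln ((A * t) ^ (p + 1) / M (p + 1))"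
      using t A Npos[of p] by (intro ln_mono) auto
    moreover have "ln (t ^ (p + 1) / N p) = ln (t ^ p / N p) + ln t"
      using t Npos[of p] by (simp add: ln_div ln_mult)
    ultimately have "ln (t ^ p / N p) + ln t \<le> ln ((A * t) ^ (p + 1) / M (p + 1))"
      by simp
    also have "ereal \<dots> \<le> assoc_fun M (A * t)"
      using A t Mpos by (intro assoc_fun_ge) auto
    finally show "ereal (ln (t ^ p / N p)) + ereal (ln t) \<le> assoc_fun M (A * t)"
      by simp
  qed
  finally show ?thesis .
qed

lemma quotient_bound_if_assoc_fun_shift_le:
  fixes M N :: "nat \<Rightarrow> real"
  assumes Mpos: "\<And>p. M p > 0" and Npos: "\<And>p. N p > 0" and A: "A > 0"
    and Mlc: "\<And>p. p \<ge> 1 \<Longrightarrow> (M p)^2 \<le> M (p - 1) * M (p + 1)"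
    and shift: "\<And>t. t > 0 \<Longrightarrow> assoc_fun N t + ereal (ln t) \<le> assoc_fun M (A * t) + ereal B"
  shows "M (p + 1) \<le> exp B * A ^ (p + 1) * N p"
proof -
  define s where "s = M (Suc p) / M p"
  define t where "t = s / A"
  have s: "s > 0" unfolding s_def using Mpos by simp
  have t: "t > 0" unfolding t_def using s A by simp
  have s_eq: "s = A * t" unfolding t_def using A by simp
  have "ereal (ln (t ^ p / N p)) + ereal (ln t) \<le> assoc_fun N t + ereal (ln t)"
    using assoc_fun_ge[OF t Npos] by (rule add_right_mono)
  also have "\<dots> \<le> assoc_fun M s + ereal B"
    using shift[OF t] by (simp add: s_eq)
  also have "\<dots> = ereal (ln (s ^ Suc p / M (Suc p)) + B)"
    using assoc_fun_at_quotient[OF Mpos Mlc s_def] by simp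
  finally have "ln (t ^ Suc p / N p) \<le> ln (exp B * s ^ Suc p / M (Suc p))"
    using t s Npos[of p] Mpos[of "Suc p"] by (simp add: ln_div ln_mult)
  then have "t ^ Suc p / N p \<le> exp B * (A * t) ^ Suc p / M (Suc p)"
    using t s Npos[of p] Mpos[of "Suc p"] by (simp add: s_eq)
  then show ?thesis
    using t Npos[of p] Mpos[of "Suc p"]
    by (simp add: field_simps power_mult_distrib)
qed

theorem lemma2p2:
  fixes M N :: "nat \<Rightarrow> real"
  assumes Mpos: "\<And>p. M p > 0" and Npos: "\<And>p. N p > 0"
    and M0: "M 0 = 1" and N0: "N 0 = 1"
    and Mlc: "\<And>p. p \<ge> 1 \<Longrightarrow> (M p)^2 \<le> M (p - 1) * M (p + 1)"
    and Nlc: "\<And>p. p \<ge> 1 \<Longrightarrow> (N p)^2 \<le> N (p - 1) * N (p + 1)"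
  shows "(\<exists>A\<ge>1. \<forall>p. M (p + 1) \<le> A ^ (p + 1) * N p) \<longleftrightarrow>
         (\<exists>A\<ge>1. \<exists>B>0. \<forall>t>0.
            assoc_fun N t + ereal (ln t) \<le> assoc_fun M (A * t) + ereal B)"
proof
  assume "\<exists>A\<ge>1. \<forall>p. M (p + 1) \<le> A ^ (p + 1) * N p"
  then obtain A where A: "A \<ge> 1" and bound: "\<And>p. M (p + 1) \<le> A ^ (p + 1) * N p" by blast
  have "assoc_fun N t + ereal (ln t) \<le> assoc_fun M (A * t) + ereal 1" if "t > 0" for t
    using assoc_fun_shift_le_if_quotient_bound[OF Mpos Npos _ bound that] A
    by (cases "assoc_fun M (A * t)") (auto intro: order_trans)
  then show "\<exists>A\<ge>1. \<exists>B>0. \<forall>t>0. assoc_fun N t + ereal (ln t) \<le> assoc_fun M (A * t) + ereal B"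
    using A by (intro exI[of _ A] conjI exI[of _ "1::real"]) auto
next
  assume "\<exists>A\<ge>1. \<exists>B>0. \<forall>t>0.
            assoc_fun N t + ereal (ln t) \<le> assoc_fun M (A * t) + ereal B"
  then obtain A B where A: "A \<ge> 1" and B: "B > 0"
    and shift: "\<And>t. t > 0 \<Longrightarrow> assoc_fun N t + ereal (ln t) \<le> assoc_fun M (A * t) + ereal B"
    by blast
  have "M (p + 1) \<le> (exp B * A) ^ (p + 1) * N p" for p
  proof -
    have "exp B ^ 1 \<le> exp B ^ (p + 1)"
      using B by (intro power_increasing) auto
    then have "exp B * A ^ (p + 1) * N p \<le> (exp B * A) ^ (p + 1) * N p"
      using Npos[of p] A by (simp add: power_mult_distrib mult_right_mono)
    moreover have "M (p + 1) \<le> exp B * A ^ (p + 1) * N p"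
      using A by (intro quotient_bound_if_assoc_fun_shift_le[OF Mpos Npos _ Mlc shift]) auto
    ultimately show ?thesis by linarith
  qed
  moreover have "1 \<le> exp B * A"
    using A B mult_mono[of 1 "exp B" 1 A] by simp
  ultimately show "\<exists>A\<ge>1. \<forall>p. M (p + 1) \<le> A ^ (p + 1) * N p" by blast
qed

end
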